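(* Let $g_A(w)=\exp\!\left(-\tfrac23\operatorname{Re} w^{3/2}\right)$ with the principal branch of $w^{3/2}$ (cut along $(-\infty,0]$). If $z\in\mathbb{C}\setminus\mathbb{R}$, then the map $x\mapsto g_A(x-z)$, $x\in[0,\infty)$, is decreasing. If $z\in\mathbb{R}$, then $g_A(x-z)=1$ for $x\in[0,z]$ and $x\mapsto g_A(x-z)$ is decreasing for $x\in(z,\infty)$. *)

theory Defs
  imports "HOL-Analysis.Analysis"
begin

text \<open>g_A(w) = exp(-(2/3) Re w^(3/2)), principal branch: complex powr uses the
principal logarithm ln (imaginary part in (-pi, pi]), i.e. cut along (-inf, 0].\<close>
definition gA :: "complex \<Rightarrow> real" where
  "gA w = exp (- (2/3) * Re (w powr (3/2)))"

end

theory Submission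
  imports Defs
begin

text \<open>Write \<open>w powr (3/2) = s ^ 3\<close> with \<open>s = csqrt w = a + b\<i>\<close>, \<open>a \<ge> 0\<close>. On a horizontal
  line \<open>Im w = 2ab = c\<close>, both \<open>Re w = a\<^sup>2 - c\<^sup>2/(4a\<^sup>2)\<close> and \<open>Re (s ^ 3) = a ^ 3 - 3c\<^sup>2/(4a)\<close> are
  strictly increasing in \<open>a > 0\<close>; hence off the cut \<open>Re (w powr (3/2))\<close> increases with
  \<open>Re w\<close> and \<open>gA\<close> decreases. On the cut \<open>s\<close>, and hence \<open>s ^ 3\<close>, is purely imaginary,
  so \<open>gA = 1\<close> there.\<close>

lemma less_of_sq_diff_less_same_prod:
  fixes a1 a2 b1 b2 :: real
  assumes "a1 > 0" "a2 > 0" "a1 * b1 = a2 * b2" "a1\<^sup>2 - b1\<^sup>2 < a2\<^sup>2 - b2\<^sup>2"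
  shows "a1 < a2"
proof (rule ccontr)
  assume "\<not> a1 < a2"
  then have "a2\<^sup>2 \<le> a1\<^sup>2"
    using assms(2) by (simp add: power_mono)
  have "a2\<^sup>2 * b1\<^sup>2 \<le> a1\<^sup>2 * b1\<^sup>2"
    using \<open>a2\<^sup>2 \<le> a1\<^sup>2\<close> by (simp add: mult_right_mono)
  also have "\<dots> = a2\<^sup>2 * b2\<^sup>2"
    using assms(3) by (metis power_mult_distrib)
  finally have "b1\<^sup>2 \<le> b2\<^sup>2"
    using assms(2) by simp
  with \<open>a2\<^sup>2 \<le> a1\<^sup>2\<close> assms(4) show False
    by linarith
qed

lemma cube_re_part_less_same_prod:
  fixes a1 a2 b1 b2 :: real
  assumes "0 < a1" "a1 < a2" "a1 * b1 = a2 * b2"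
  shows "a1 ^ 3 - 3 * a1 * b1\<^sup>2 < a2 ^ 3 - 3 * a2 * b2\<^sup>2"
proof -
  have "a1 ^ 3 < a2 ^ 3"
    using assms by (simp add: power_strict_mono)
  moreover have "a2 * b2\<^sup>2 \<le> a1 * b1\<^sup>2"
  proof -
    have "a2 * (a2 * b2\<^sup>2) = a1 * (a1 * b1\<^sup>2)"
      using assms(3) by (metis power2_eq_square mult.assoc mult.left_commute)
    also have "\<dots> \<le> a2 * (a1 * b1\<^sup>2)"
      using assms by (intro mult_right_mono) auto
    finally show ?thesis
      using assms by simp
  qed
  ultimately show ?thesis
    by linarith
qed

lemma powr_three_halves_eq_csqrt_cube: "w powr (3/2) = csqrt w ^ 3"
proof (cases "w = 0")
  case False
  have "csqrt w ^ 3 = exp (Ln w / 2) ^ 3"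
    using False by (simp add: csqrt_exp_Ln)
  also have "\<dots> = exp (of_nat 3 * (Ln w / 2))"
    by (simp only: exp_of_nat_mult)
  finally show ?thesis
    using False by (simp add: powr_def)
qed simp

lemma Re_cube: "Re (s ^ 3) = Re s ^ 3 - 3 * Re s * (Im s)\<^sup>2"
  by (simp add: power3_eq_cube power2_eq_square algebra_simps)

lemma Re_csqrt_pos:
  assumes "Im w \<noteq> 0 \<or> Re w > 0"
  shows "Re (csqrt w) > 0"
proof (rule ccontr)
  define s where "s = csqrt w"
  assume "\<not> Re (csqrt w) > 0"
  then have "Re s = 0"
    using csqrt_principal[of w] unfolding s_def by linarith
  moreover have "s\<^sup>2 = w"
    by (simp add: s_def)
  ultimately have "Re w = - (Im s)\<^sup>2" "Im w = 0"
    by (auto simp: power2_eq_square)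
  with assms show False
    by (smt (verit) zero_le_power2)
qed

lemma Re_powr_three_halves_strict_mono:
  assumes "Im w1 = Im w2" "Re w1 < Re w2" "Im w1 \<noteq> 0 \<or> Re w1 > 0"
  shows "Re (w1 powr (3/2)) < Re (w2 powr (3/2))"
proof -
  define s1 s2 where "s1 = csqrt w1" and "s2 = csqrt w2"
  have pos: "Re s1 > 0" "Re s2 > 0"
    unfolding s1_def s2_def by (rule Re_csqrt_pos; use assms in auto)+
  have "s1\<^sup>2 = w1" "s2\<^sup>2 = w2"
    by (simp_all add: s1_def s2_def)
  then have Re_w: "Re w1 = (Re s1)\<^sup>2 - (Im s1)\<^sup>2" "Re w2 = (Re s2)\<^sup>2 - (Im s2)\<^sup>2"
    and Im_w: "Im w1 = 2 * (Re s1 * Im s1)" "Im w2 = 2 * (Re s2 * Im s2)"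
    by (auto simp: power2_eq_square)
  have same_prod: "Re s1 * Im s1 = Re s2 * Im s2"
    using Im_w assms(1) by simp
  have "Re s1 < Re s2"
    using pos same_prod assms(2) unfolding Re_w by (rule less_of_sq_diff_less_same_prod)
  then show ?thesis
    unfolding powr_three_halves_eq_csqrt_cube Re_cube s1_def [symmetric] s2_def [symmetric]
    using pos same_prod by (intro cube_re_part_less_same_prod)
qed

lemma gA_strict_antimono_horizontal:
  assumes "Im w1 = Im w2" "Re w1 < Re w2" "Im w1 \<noteq> 0 \<or> Re w1 > 0"
  shows "gA w2 < gA w1"
  using Re_powr_three_halves_strict_mono [OF assms] by (simp add: gA_def)

lemma gA_of_nonpos_real:
  assumes "v \<le> 0"
  shows "gA (of_real v) = 1"
  using assms by (simp add: gA_def powr_three_halves_eq_csqrt_cube Re_cube)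

theorem lemma2p2:
  fixes z :: complex
  shows "(z \<notin> \<real> \<longrightarrow>
           (\<forall>x\<in>{0::real..}. \<forall>y\<in>{0::real..}. x < y \<longrightarrow>
              gA (of_real y - z) < gA (of_real x - z)))
       \<and> (z \<in> \<real> \<longrightarrow>
           (\<forall>x\<in>{0::real..Re z}. gA (of_real x - z) = 1) \<and>
           (\<forall>x\<in>{Re z<..}. \<forall>y\<in>{Re z<..}. x < y \<longrightarrow>
              gA (of_real y - z) < gA (of_real x - z)))"
proof (intro conjI impI ballI)
  fix x y :: real
  assume "z \<notin> \<real>" "x < y"
  then show "gA (of_real y - z) < gA (of_real x - z)"
    by (intro gA_strict_antimono_horizontal) (auto simp: complex_is_Real_iff)
next
  fix x :: real
  assume "z \<in> \<real>" "x \<in> {0..Re z}"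
  then have "of_real (x - Re z) = of_real x - z"
    by (simp add: complex_eq_iff complex_is_Real_iff)
  moreover have "gA (of_real (x - Re z)) = 1"
    using \<open>x \<in> {0..Re z}\<close> by (intro gA_of_nonpos_real) simp
  ultimately show "gA (of_real x - z) = 1"
    by metis
next
  fix x y :: real
  assume "z \<in> \<real>" "x \<in> {Re z<..}" "x < y"
  then show "gA (of_real y - z) < gA (of_real x - z)"
    by (intro gA_strict_antimono_horizontal) auto
qed

end
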